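(* For all $n\ge0$ and $j=0,1,2$, \[ c_{3n+j}^2=\delta_{j,0}+(1-\delta_{j,0})c_{j-1}^2+\sum_{k=1}^n\left\{c_{3k+j-1}^2+2\sum_{i=0}^{3(k-1)+j}p_{3k+j-1-i}c_i^2\right\}. \]
   Context: The Narayana's cows numbers $c_n$ are defined by $c_n=\delta_{n,0}+c_{n-1}+c_{n-3}$ for $n\ge0$, $c_n=0$ for $n<0$. The Padovan numbers $p_n$ are defined by $p_n=\delta_{n,0}+p_{n-2}+p_{n-3}$ for $n\ge0$, $p_n=0$ for $n<0$. $\delta_{i,j}$ is $1$ if $i=j$ and $0$ otherwise. Empty sums are $0$. *)

theory Defs
  imports Main
begin

function cow :: "int \<Rightarrow> int" where
  "cow n = (if n < 0 then 0 else (if n = 0 then 1 else 0) + cow (n - 1) + cow (n - 3))"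
  by auto
termination by (relation "measure (\<lambda>n. nat (n + 1))") auto

function padovan :: "int \<Rightarrow> int" where
  "padovan n = (if n < 0 then 0 else (if n = 0 then 1 else 0) + padovan (n - 2) + padovan (n - 3))"
  by auto
termination by (relation "measure (\<lambda>n. nat (n + 1))") auto

end

theory Submission
  imports Defs
begin

text \<open>
  The key identity is the convolution formula
  \<open>c(m+2) c(m) = (\<Sum>i\<le>m. p(m+2-i) c(i)\<^sup>2)\<close>:
  both sides satisfy \<open>X(m+3) = X(m+1) + X(m) + c(m+3)\<^sup>2 + c(m+2)\<^sup>2\<close>
  (the left side by the cow recurrence, the right side by the Padovan recurrence)
  and they agree for \<open>m = 0, 1, 2\<close>.
  Squaring \<open>c(m+3) = c(m+2) + c(m)\<close> then gives
  \<open>c(m+3)\<^sup>2 = c(m)\<^sup>2 + c(m+2)\<^sup>2 + 2 (\<Sum>i\<le>m. p(m+2-i) c(i)\<^sup>2)\<close>,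
  and the theorem telescopes this along \<open>m = j, j+3, j+6, \<dots>\<close>.
\<close>

declare cow.simps [simp del] padovan.simps [simp del]

lemma cow_neg: "n < 0 \<Longrightarrow> cow n = 0"
  by (subst cow.simps) simp

lemma cow_rec: "n \<ge> 1 \<Longrightarrow> cow n = cow (n - 1) + cow (n - 3)"
  by (subst cow.simps) simp

lemma padovan_neg: "n < 0 \<Longrightarrow> padovan n = 0"
  by (subst padovan.simps) simp

lemma padovan_rec: "n \<ge> 1 \<Longrightarrow> padovan n = padovan (n - 2) + padovan (n - 3)"
  by (subst padovan.simps) simp

lemma cow_0: "cow 0 = 1"
  by (subst cow.simps) (simp add: cow_neg)

lemma cow_values: "cow 1 = 1" "cow 2 = 1" "cow 3 = 2" "cow 4 = 3"
  by (simp_all add: cow_rec cow_0 cow_neg)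

lemma padovan_0: "padovan 0 = 1"
  by (subst padovan.simps) (simp add: padovan_neg)

lemma padovan_1: "padovan 1 = 0"
  by (subst padovan.simps) (simp add: padovan_neg)

lemma padovan_values: "padovan 2 = 1" "padovan 3 = 1" "padovan 4 = 1"
  by (simp_all add: padovan_rec padovan_0 padovan_1 padovan_neg)

definition padovan_cow_sq_conv :: "nat \<Rightarrow> int" where
  "padovan_cow_sq_conv m = (\<Sum>i\<le>m. padovan (int m + 2 - int i) * (cow (int i))\<^sup>2)"

lemma padovan_cow_sq_conv_rec:
  "padovan_cow_sq_conv (m + 3) = padovan_cow_sq_conv (m + 1) + padovan_cow_sq_conv m
     + (cow (int m + 3))\<^sup>2 + (cow (int m + 2))\<^sup>2"
proof -
  let ?term = "\<lambda>s i. padovan (int m + s - int i) * (cow (int i))\<^sup>2"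
  have "padovan_cow_sq_conv (m + 3) = (\<Sum>i\<le>m + 3. ?term 3 i + ?term 2 i)"
    unfolding padovan_cow_sq_conv_def
    by (intro sum.cong refl) (subst padovan_rec, auto simp: algebra_simps)
  also have "\<dots> = (\<Sum>i\<le>m + 3. ?term 3 i) + (\<Sum>i\<le>m + 3. ?term 2 i)"
    by (rule sum.distrib)
  also have "(\<Sum>i\<le>m + 3. ?term 3 i) = padovan_cow_sq_conv (m + 1) + (cow (int m + 3))\<^sup>2"
    unfolding padovan_cow_sq_conv_def numeral_3_eq_3
    by (simp add: padovan_0 padovan_1 algebra_simps)
  also have "(\<Sum>i\<le>m + 3. ?term 2 i) = padovan_cow_sq_conv m + (cow (int m + 2))\<^sup>2"
    unfolding padovan_cow_sq_conv_def numeral_3_eq_3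
    by (simp add: padovan_0 padovan_1 padovan_neg algebra_simps)
  finally show ?thesis
    by simp
qed

lemma cow_mult_cow_eq_conv: "cow (int m + 2) * cow (int m) = padovan_cow_sq_conv m"
proof (induction m rule: less_induct)
  case (less m)
  show ?case
  proof (cases "m < 3")
    case True
    then consider "m = 0" | "m = 1" | "m = 2"
      by linarith
    then show ?thesis
      by cases (simp_all add: padovan_cow_sq_conv_def numeral_2_eq_2 cow_0 cow_values
          padovan_values)
  next
    case False
    then obtain q where m: "m = q + 3"
      using le_add_diff_inverse2 by (metis not_less)
    have rec: "cow (int q + s) = cow (int q + s - 1) + cow (int q + s - 3)" if "s \<ge> 1" for s
      using that by (simp add: cow_rec)
    have "cow (int m + 2) * cow (int m) = cow (int q + 5) * cow (int q + 3)"
      by (simp add: m algebra_simps)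
    also have "\<dots> = cow (int q + 3) * cow (int q + 1) + cow (int q + 2) * cow (int q)
        + (cow (int q + 3))\<^sup>2 + (cow (int q + 2))\<^sup>2"
      using rec[of 5] rec[of 4] rec[of 3] by (simp add: algebra_simps power2_eq_square)
    also have "\<dots> = padovan_cow_sq_conv m"
      using less[of "q + 1"] less[of q]
      by (simp add: m padovan_cow_sq_conv_rec algebra_simps)
    finally show ?thesis .
  qed
qed

lemma cow_sq_step:
  "(cow (int m + 3))\<^sup>2 = (cow (int m))\<^sup>2 + (cow (int m + 2))\<^sup>2 + 2 * padovan_cow_sq_conv m"
proof -
  have "cow (int m + 3) = cow (int m + 2) + cow (int m)"
    by (simp add: cow_rec algebra_simps)
  then show ?thesis
    by (simp add: cow_mult_cow_eq_conv[symmetric] power2_eq_square algebra_simps)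
qed

lemma sum_int_atLeast0AtMost: "(\<Sum>i = 0..int m. f i) = (\<Sum>i\<le>m. f (int i))"
  by (simp add: image_int_atLeastAtMost[of 0 m, simplified, symmetric] sum.reindex atLeast0AtMost)

theorem mainTheorem15:
  fixes n :: nat and j :: int
  assumes "j \<in> {0, 1, 2}"
  shows "(cow (3 * int n + j))^2 =
    (if j = 0 then 1 else 0) + (if j = 0 then 0 else 1) * (cow (j - 1))^2
    + (\<Sum>k = 1..int n. (cow (3 * k + j - 1))^2
        + 2 * (\<Sum>i = 0..3 * (k - 1) + j. padovan (3 * k + j - 1 - i) * (cow i)^2))"
proof (induction n)
  case 0
  then show ?case
    using assms by (auto simp: cow_0 cow_values)
next
  case (Suc n)
  define m where "m = nat (3 * int n + j)"
  have m: "3 * int n + j = int m"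
    using assms by (auto simp: m_def)
  define summand where "summand k = (cow (3 * k + j - 1))\<^sup>2
    + 2 * (\<Sum>i = 0..3 * (k - 1) + j. padovan (3 * k + j - 1 - i) * (cow i)\<^sup>2)" for k
  have "{1..int (Suc n)} = insert (int n + 1) {1..int n}"
    using atLeastAtMostPlus1_int_conv[of 1 "int n"] by (simp add: add.commute)
  then have "sum summand {1..int (Suc n)} = sum summand {1..int n} + summand (int n + 1)"
    by simp
  moreover have "summand (int n + 1)
      = (cow (int m + 2))\<^sup>2 + 2 * (\<Sum>i = 0..int m. padovan (int m + 2 - i) * (cow i)\<^sup>2)"
    unfolding summand_def by (simp add: m[symmetric] algebra_simps)
  moreover have "(\<Sum>i = 0..int m. padovan (int m + 2 - i) * (cow i)\<^sup>2) = padovan_cow_sq_conv m"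
    by (simp add: sum_int_atLeast0AtMost padovan_cow_sq_conv_def)
  moreover have "(cow (3 * int (Suc n) + j))\<^sup>2 = (cow (int m))\<^sup>2 + (cow (int m + 2))\<^sup>2
      + 2 * padovan_cow_sq_conv m"
    using cow_sq_step[of m] by (simp add: m[symmetric] ac_simps)
  ultimately show ?case
    using Suc unfolding summand_def m by simp
qed

end
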